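(* Let $L$ be a loop and $n\ge 1$ an integer. For every $a\in L$ and every $F\in\gamma_n\mathrm{LMlt}(L)$, we have $F(a)\equiv a \pmod{D_nL}$, i.e. $F(a)$ and $a$ have the same image in the quotient loop $L/D_nL$.
   Context: A loop is a set $L$ with a binary product and a two-sided identity $e$ such that for each $a\in L$ the maps $L_a\colon x\mapsto ax$ and $R_a\colon x\mapsto xa$ are bijections. $\mathrm{LMlt}(L)$ is the group of permutations of $L$ generated by all $L_a$, $a\in L$. For a group $G$, $\gamma_1G=G$ and $\gamma_{k+1}G=[G,\gamma_kG]$. The loop algebra $\mathbb{Q}L$ has basis $L$ with the bilinearly extended product; the augmentation ideal $I$ is the kernel of the linear map $\mathbb{Q}L\to\mathbb{Q}$ sending each element of $L$ to $1$; $I^k$ is the ideal spanned by all products (any bracketing) of at least $k$ elements of $I$; and $D_kL=\{g\in L\mid g-1\in I^k\}$, which is a normal subloop of $L$. *)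

theory Defs
  imports "HOL-Algebra.Bij" "HOL-Algebra.Generated_Groups" Complex_Main
begin

definition is_loop :: "'a set \<Rightarrow> ('a \<Rightarrow> 'a \<Rightarrow> 'a) \<Rightarrow> 'a \<Rightarrow> bool" where
  "is_loop L pr e \<longleftrightarrow>
     e \<in> L \<and> (\<forall>x\<in>L. \<forall>y\<in>L. pr x y \<in> L) \<and>
     (\<forall>x\<in>L. pr e x = x \<and> pr x e = x) \<and>
     (\<forall>a\<in>L. bij_betw (\<lambda>x. pr a x) L L \<and> bij_betw (\<lambda>x. pr x a) L L)"

definition ltrans :: "'a set \<Rightarrow> ('a \<Rightarrow> 'a \<Rightarrow> 'a) \<Rightarrow> 'a \<Rightarrow> ('a \<Rightarrow> 'a)" where
  "ltrans L pr a = (\<lambda>x\<in>L. pr a x)"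

definition LMlt :: "'a set \<Rightarrow> ('a \<Rightarrow> 'a \<Rightarrow> 'a) \<Rightarrow> ('a \<Rightarrow> 'a) set" where
  "LMlt L pr = generate (BijGroup L) (ltrans L pr ` L)"

definition comm_subgroup :: "('g, 'b) monoid_scheme \<Rightarrow> 'g set \<Rightarrow> 'g set \<Rightarrow> 'g set" where
  "comm_subgroup G A B =
     generate G (\<Union>a\<in>A. \<Union>b\<in>B. {inv\<^bsub>G\<^esub> a \<otimes>\<^bsub>G\<^esub> inv\<^bsub>G\<^esub> b \<otimes>\<^bsub>G\<^esub> a \<otimes>\<^bsub>G\<^esub> b})"

(* lower central series of a subgroup H of an ambient group G, indexed from 1:
   lcs G H 1 = H, lcs G H (k+1) = [H, lcs G H k] *)
fun lcs :: "('g, 'b) monoid_scheme \<Rightarrow> 'g set \<Rightarrow> nat \<Rightarrow> 'g set" where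
  "lcs G H 0 = H"
| "lcs G H (Suc 0) = H"
| "lcs G H (Suc (Suc k)) = comm_subgroup G H (lcs G H (Suc k))"

(* Loop algebra QL: finitely supported functions L \<rightarrow> rat (zero outside L) *)
definition QL :: "'a set \<Rightarrow> ('a \<Rightarrow> rat) set" where
  "QL L = {f. finite {x. f x \<noteq> 0} \<and> {x. f x \<noteq> 0} \<subseteq> L}"

definition bas :: "'a \<Rightarrow> ('a \<Rightarrow> rat)" where
  "bas g = (\<lambda>x. if x = g then 1 else 0)"

definition qprod :: "('a \<Rightarrow> 'a \<Rightarrow> 'a) \<Rightarrow> ('a \<Rightarrow> rat) \<Rightarrow> ('a \<Rightarrow> rat) \<Rightarrow> ('a \<Rightarrow> rat)" where
  "qprod pr f g = (\<lambda>z. \<Sum>x\<in>{x. f x \<noteq> 0}. \<Sum>y\<in>{y. g y \<noteq> 0}.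
                         if pr x y = z then f x * g y else 0)"

definition aug_ideal :: "'a set \<Rightarrow> ('a \<Rightarrow> rat) set" where
  "aug_ideal L = {f \<in> QL L. (\<Sum>x\<in>{x. f x \<noteq> 0}. f x) = 0}"

(* products, in any bracketing, of exactly k elements of I *)
inductive bprods :: "'a set \<Rightarrow> ('a \<Rightarrow> 'a \<Rightarrow> 'a) \<Rightarrow> nat \<Rightarrow> ('a \<Rightarrow> rat) \<Rightarrow> bool"
  for L pr where
  single: "x \<in> aug_ideal L \<Longrightarrow> bprods L pr 1 x"
| prod: "bprods L pr i x \<Longrightarrow> bprods L pr j y \<Longrightarrow> bprods L pr (i + j) (qprod pr x y)"

inductive_set gen_ideal :: "'a set \<Rightarrow> ('a \<Rightarrow> 'a \<Rightarrow> 'a) \<Rightarrow> ('a \<Rightarrow> rat) set \<Rightarrow> ('a \<Rightarrow> rat) set"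
  for L pr S where
  gen: "x \<in> S \<Longrightarrow> x \<in> gen_ideal L pr S"
| zero: "(\<lambda>_. 0) \<in> gen_ideal L pr S"
| add: "x \<in> gen_ideal L pr S \<Longrightarrow> y \<in> gen_ideal L pr S \<Longrightarrow> (\<lambda>z. x z + y z) \<in> gen_ideal L pr S"
| smult: "x \<in> gen_ideal L pr S \<Longrightarrow> (\<lambda>z. c * x z) \<in> gen_ideal L pr S"
| lmult: "x \<in> gen_ideal L pr S \<Longrightarrow> a \<in> QL L \<Longrightarrow> qprod pr a x \<in> gen_ideal L pr S"
| rmult: "x \<in> gen_ideal L pr S \<Longrightarrow> a \<in> QL L \<Longrightarrow> qprod pr x a \<in> gen_ideal L pr S"

definition aug_pow :: "'a set \<Rightarrow> ('a \<Rightarrow> 'a \<Rightarrow> 'a) \<Rightarrow> nat \<Rightarrow> ('a \<Rightarrow> rat) set" where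
  "aug_pow L pr k = gen_ideal L pr {x. \<exists>i\<ge>k. bprods L pr i x}"

definition Dsub :: "'a set \<Rightarrow> ('a \<Rightarrow> 'a \<Rightarrow> 'a) \<Rightarrow> 'a \<Rightarrow> nat \<Rightarrow> 'a set" where
  "Dsub L pr e k = {g \<in> L. (\<lambda>z. bas g z - bas e z) \<in> aug_pow L pr k}"

(* left coset xN; for a normal subloop N the quotient L/N consists of these cosets *)
definition lcoset :: "('a \<Rightarrow> 'a \<Rightarrow> 'a) \<Rightarrow> 'a \<Rightarrow> 'a set \<Rightarrow> 'a set" where
  "lcoset pr x N = (\<lambda>d. pr x d) ` N"

end

(*
  The permutations of L act linearly on the loop algebra QL, the left translation L_a acting
  as left multiplication by a. Call a permutation of degree k if it and its inverse map each
  power I^m of the augmentation ideal into itself modulo I^(m+k). These permutations form a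
  subgroup, and the commutator of elements of degrees p and q has degree p + q, because
  xy - yx = (x - 1)(y - 1) - (y - 1)(x - 1). Since a - e lies in I, every L_a has degree 1
  (for its inverse one cancels the factor a: if a g lies in I^j then so does g), so every
  F in the n-th term of the lower central series of LMlt(L) has degree n. Applied to the
  basis element a this gives F(a) - a in I^n, and then F(a) and a lie in the same left
  coset of D_n L.
*)

theory Submission
  imports Defs "HOL-Library.Function_Algebras"
begin

section \<open>Filtered group actions\<close>

locale filtered_action =
  fixes G :: "('g, 'c) monoid_scheme"
    and act :: "'g \<Rightarrow> 'm::ab_group_add \<Rightarrow> 'm"
    and F :: "nat \<Rightarrow> 'm set"
  assumes group_G: "group G"
    and act_mult: "x \<in> carrier G \<Longrightarrow> y \<in> carrier G \<Longrightarrow> act (x \<otimes>\<^bsub>G\<^esub> y) f = act x (act y f)"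
    and act_one: "f \<in> F 0 \<Longrightarrow> act \<one>\<^bsub>G\<^esub> f = f"
    and act_diff: "act x (f - g) = act x f - act x g"
    and F_zero: "0 \<in> F m"
    and F_diff: "f \<in> F m \<Longrightarrow> g \<in> F m \<Longrightarrow> f - g \<in> F m"
    and F_Suc: "F (Suc m) \<subseteq> F m"
begin

sublocale G: group G by (rule group_G)

lemma F_add: "f \<in> F m \<Longrightarrow> g \<in> F m \<Longrightarrow> f + g \<in> F m"
  using F_diff[OF _ F_diff[OF F_zero]] by (metis diff_0 diff_minus_eq_add)

lemma F_antimono: "i \<le> j \<Longrightarrow> F j \<subseteq> F i"
  by (induction j rule: dec_induct) (use F_Suc in auto)

definition shifts :: "nat \<Rightarrow> 'g \<Rightarrow> bool" where
  "shifts k x \<longleftrightarrow> (\<forall>m. \<forall>f\<in>F m. act x f - f \<in> F (m + k))"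

text \<open>The inverse is included because \<open>shifts k\<close> alone is not visibly closed under inversion.\<close>
definition has_degree :: "nat \<Rightarrow> 'g \<Rightarrow> bool" where
  "has_degree k x \<longleftrightarrow> x \<in> carrier G \<and> shifts k x \<and> shifts k (inv\<^bsub>G\<^esub> x)"

lemma shiftsD: "shifts k x \<Longrightarrow> f \<in> F m \<Longrightarrow> act x f - f \<in> F (m + k)"
  by (simp add: shifts_def)

lemma shifts_act_closed:
  assumes "shifts k x" "f \<in> F m"
  shows "act x f \<in> F m"
proof -
  have "act x f - f \<in> F m"
    using shiftsD[OF assms] F_antimono[of m "m + k"] by auto
  then show ?thesis using F_add[OF _ assms(2)] by fastforce
qed

lemma shifts_one: "shifts k \<one>\<^bsub>G\<^esub>"
  unfolding shifts_def using F_antimono[of 0] act_one F_zero by fastforce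

lemma shifts_mult:
  assumes "x \<in> carrier G" "y \<in> carrier G" "shifts k x" "shifts k y"
  shows "shifts k (x \<otimes>\<^bsub>G\<^esub> y)"
  unfolding shifts_def
proof (intro allI ballI)
  fix m f assume f: "f \<in> F m"
  have "act (x \<otimes>\<^bsub>G\<^esub> y) f - f = (act x (act y f) - act y f) + (act y f - f)"
    by (simp add: act_mult assms)
  then show "act (x \<otimes>\<^bsub>G\<^esub> y) f - f \<in> F (m + k)"
    using F_add shiftsD assms(3,4) f shifts_act_closed by metis
qed

lemma has_degree_one: "has_degree k \<one>\<^bsub>G\<^esub>"
  by (simp add: has_degree_def shifts_one)

lemma has_degree_inv: "has_degree k x \<Longrightarrow> has_degree k (inv\<^bsub>G\<^esub> x)"
  by (auto simp: has_degree_def)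

lemma has_degree_mult: "has_degree k x \<Longrightarrow> has_degree k y \<Longrightarrow> has_degree k (x \<otimes>\<^bsub>G\<^esub> y)"
  by (auto simp: has_degree_def G.inv_mult_group intro: shifts_mult)

lemma has_degree_generate:
  assumes "\<forall>s\<in>S. has_degree k s" "x \<in> generate G S"
  shows "has_degree k x"
  using assms(2)
  by induction (use assms(1) has_degree_one has_degree_inv has_degree_mult in auto)

text \<open>On \<open>F 0\<close> the commutator minus \<open>1\<close> acts as \<open>x\<inverse> y\<inverse> (x y - y x)\<close>, and
  \<open>x y - y x = (x - 1)(y - 1) - (y - 1)(x - 1)\<close> raises the filtration degree by \<open>p + q\<close>.\<close>
lemma shifts_commutator:
  assumes x: "has_degree p x" and y: "has_degree q y"
  shows "shifts (p + q) (inv\<^bsub>G\<^esub> x \<otimes>\<^bsub>G\<^esub> inv\<^bsub>G\<^esub> y \<otimes>\<^bsub>G\<^esub> x \<otimes>\<^bsub>G\<^esub> y)"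
  unfolding shifts_def
proof (intro allI ballI)
  fix m f assume f: "f \<in> F m"
  have xG: "x \<in> carrier G" and yG: "y \<in> carrier G"
    and sx: "shifts p x" "shifts p (inv\<^bsub>G\<^esub> x)" and sy: "shifts q y" "shifts q (inv\<^bsub>G\<^esub> y)"
    using x y by (auto simp: has_degree_def)
  let ?x = "act x" and ?y = "act y" and ?x' = "act (inv\<^bsub>G\<^esub> x)" and ?y' = "act (inv\<^bsub>G\<^esub> y)"
  have F0: "F m \<subseteq> F 0" by (rule F_antimono) simp
  have cancel: "act (inv\<^bsub>G\<^esub> z) (act z g) = g" if "z \<in> carrier G" "g \<in> F 0" for z g
    using that act_mult[of "inv\<^bsub>G\<^esub> z" z g] act_one by simp
  have xf: "?x f \<in> F 0" using shifts_act_closed[OF sx(1) f] F0 by auto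
  define h1 where "h1 = ?y f - f"
  define h2 where "h2 = ?x f - f"
  have "?x h1 - h1 \<in> F (m + q + p)" using shiftsD[OF sx(1) shiftsD[OF sy(1) f]] by (simp add: h1_def)
  moreover have "?y h2 - h2 \<in> F (m + p + q)" using shiftsD[OF sy(1) shiftsD[OF sx(1) f]] by (simp add: h2_def)
  ultimately have "(?x h1 - h1) - (?y h2 - h2) \<in> F (m + (p + q))"
    using F_diff by (simp add: ac_simps)
  moreover have "(?x h1 - h1) - (?y h2 - h2) = ?x (?y f) - ?y (?x f)"
    by (simp add: h1_def h2_def act_diff algebra_simps)
  ultimately have "?x' (?y' (?x (?y f) - ?y (?x f))) \<in> F (m + (p + q))"
    using shifts_act_closed sx(2) sy(2) by metis
  then show "act (inv\<^bsub>G\<^esub> x \<otimes>\<^bsub>G\<^esub> inv\<^bsub>G\<^esub> y \<otimes>\<^bsub>G\<^esub> x \<otimes>\<^bsub>G\<^esub> y) f - f \<in> F (m + (p + q))"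
    using cancel[OF yG xf] cancel[OF xG] f F0 xG yG by (auto simp: act_mult act_diff)
qed

lemma has_degree_commutator:
  assumes x: "has_degree p x" and y: "has_degree q y"
  shows "has_degree (p + q) (inv\<^bsub>G\<^esub> x \<otimes>\<^bsub>G\<^esub> inv\<^bsub>G\<^esub> y \<otimes>\<^bsub>G\<^esub> x \<otimes>\<^bsub>G\<^esub> y)"
proof -
  have xG: "x \<in> carrier G" and yG: "y \<in> carrier G" using x y by (auto simp: has_degree_def)
  have "inv\<^bsub>G\<^esub> (inv\<^bsub>G\<^esub> x \<otimes>\<^bsub>G\<^esub> inv\<^bsub>G\<^esub> y \<otimes>\<^bsub>G\<^esub> x \<otimes>\<^bsub>G\<^esub> y)
      = inv\<^bsub>G\<^esub> y \<otimes>\<^bsub>G\<^esub> inv\<^bsub>G\<^esub> x \<otimes>\<^bsub>G\<^esub> y \<otimes>\<^bsub>G\<^esub> x"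
    using xG yG by (simp add: G.inv_mult_group G.m_assoc)
  then show ?thesis
    using shifts_commutator[OF x y] shifts_commutator[OF y x] xG yG
    by (simp add: has_degree_def add.commute)
qed

lemma has_degree_lcs:
  assumes "\<forall>h\<in>H. has_degree 1 h" "x \<in> lcs G H (Suc k)"
  shows "has_degree (Suc k) x"
  using assms(2)
proof (induction k arbitrary: x)
  case 0
  then show ?case using assms(1) by simp
next
  case (Suc k)
  have "\<forall>c\<in>(\<Union>a\<in>H. \<Union>b\<in>lcs G H (Suc k). {inv\<^bsub>G\<^esub> a \<otimes>\<^bsub>G\<^esub> inv\<^bsub>G\<^esub> b \<otimes>\<^bsub>G\<^esub> a \<otimes>\<^bsub>G\<^esub> b}).
      has_degree (Suc (Suc k)) c"
    using has_degree_commutator[OF bspec[OF assms(1)] Suc.IH] by auto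
  with Suc.prems show ?case
    unfolding lcs.simps comm_subgroup_def by (rule has_degree_generate[rotated])
qed

end

section \<open>The loop algebra\<close>

abbreviation supp :: "('a \<Rightarrow> rat) \<Rightarrow> 'a set" where
  "supp f \<equiv> {x. f x \<noteq> 0}"

interpretation fun_module: module "\<lambda>(c::rat) (f::'a \<Rightarrow> rat) z. c * f z"
  by standard (auto simp: fun_eq_iff algebra_simps)

lemma subspace_QL: "fun_module.subspace (QL L)"
proof -
  have "f + g \<in> QL L" if "f \<in> QL L" "g \<in> QL L" for f g
  proof -
    have "supp (f + g) \<subseteq> supp f \<union> supp g" by auto
    with that show ?thesis
      unfolding QL_def mem_Collect_eq by (meson finite_Un finite_subset le_sup_iff order_trans)
  qed
  moreover have "(\<lambda>z. c * f z) \<in> QL L" if "f \<in> QL L" for f c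
  proof -
    have "supp (\<lambda>z. c * f z) \<subseteq> supp f" by auto
    with that show ?thesis
      unfolding QL_def mem_Collect_eq by (meson finite_subset order_trans)
  qed
  ultimately show ?thesis
    unfolding fun_module.subspace_def by (auto simp: QL_def)
qed

lemma bas_QL: "a \<in> L \<Longrightarrow> bas a \<in> QL L"
  by (simp add: QL_def bas_def)

lemma qprod_eq_sum:
  assumes "finite S" "finite T" "supp f \<subseteq> S" "supp g \<subseteq> T"
  shows "qprod pr f g z = (\<Sum>x\<in>S. \<Sum>y\<in>T. if pr x y = z then f x * g y else 0)"
proof -
  have "qprod pr f g z = (\<Sum>x\<in>supp f. \<Sum>y\<in>T. if pr x y = z then f x * g y else 0)"
    unfolding qprod_def
    by (intro sum.cong refl sum.mono_neutral_left) (use assms in auto)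
  also have "\<dots> = (\<Sum>x\<in>S. \<Sum>y\<in>T. if pr x y = z then f x * g y else 0)"
    by (intro sum.mono_neutral_left) (use assms in \<open>auto intro!: sum.neutral split: if_splits\<close>)
  finally show ?thesis .
qed

lemma qprod_swap: "qprod pr f g = qprod (\<lambda>x y. pr y x) g f"
  unfolding qprod_def by (subst sum.swap) (simp add: mult.commute cong: if_cong)

lemma qprod_lincomb_left:
  assumes "finite (supp f)" "finite (supp g)" "finite (supp h)"
  shows "qprod pr (\<lambda>z. c * f z + g z) h = (\<lambda>z. c * qprod pr f h z + qprod pr g h z)"
proof
  fix z
  let ?S = "supp f \<union> supp g"
  have fin: "finite ?S" "finite (supp h)" using assms by auto
  have "qprod pr (\<lambda>z. c * f z + g z) h z
      = (\<Sum>x\<in>?S. \<Sum>y\<in>supp h. if pr x y = z then (c * f x + g x) * h y else 0)"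
    by (rule qprod_eq_sum[OF fin]) auto
  also have "\<dots> = c * (\<Sum>x\<in>?S. \<Sum>y\<in>supp h. if pr x y = z then f x * h y else 0)
      + (\<Sum>x\<in>?S. \<Sum>y\<in>supp h. if pr x y = z then g x * h y else 0)"
    by (auto simp: sum_distrib_left sum.distrib[symmetric] algebra_simps intro!: sum.cong)
  also have "\<dots> = (c * qprod pr f h z + qprod pr g h z)"
    by (simp add: qprod_eq_sum[OF fin])
  finally show "qprod pr (\<lambda>z. c * f z + g z) h z = (c * qprod pr f h z + qprod pr g h z)" .
qed

lemma qprod_lincomb_right:
  assumes "finite (supp f)" "finite (supp g)" "finite (supp h)"
  shows "qprod pr h (\<lambda>z. c * f z + g z) = (\<lambda>z. c * qprod pr h f z + qprod pr h g z)"
  using qprod_lincomb_left[OF assms, of "\<lambda>x y. pr y x" c] by (simp add: qprod_swap[of pr h])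

lemma qprod_zero_left [simp]: "qprod pr 0 g = 0"
  and qprod_zero_right [simp]: "qprod pr f 0 = 0"
  by (simp_all add: qprod_def fun_eq_iff)

lemma qprod_diff_left:
  assumes "finite (supp f)" "finite (supp g)" "finite (supp h)"
  shows "qprod pr (\<lambda>z. f z - g z) h = (\<lambda>z. qprod pr f h z - qprod pr g h z)"
  using qprod_lincomb_left[OF assms(2,1,3), of pr "-1"] by simp

lemma qprod_diff_right:
  assumes "finite (supp f)" "finite (supp g)" "finite (supp h)"
  shows "qprod pr h (\<lambda>z. f z - g z) = (\<lambda>z. qprod pr h f z - qprod pr h g z)"
  using qprod_lincomb_right[OF assms(2,1,3), of pr "-1"] by simp

lemma finite_supp_bas [simp]: "finite (supp (bas a))"
  by (simp add: bas_def)

lemma qprod_bas_bas: "qprod pr (bas a) (bas b) = bas (pr a b)"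
  by (auto simp: fun_eq_iff qprod_eq_sum[of "{a}" "{b}"] bas_def)

lemma qprod_bas_left:
  "finite (supp g) \<Longrightarrow> qprod pr (bas a) g z = (\<Sum>y\<in>supp g. if pr a y = z then g y else 0)"
  by (subst qprod_eq_sum[of "{a}" "supp g"]) (auto simp: bas_def cong: if_cong)

lemma QL_finite_supp: "f \<in> QL L \<Longrightarrow> finite (supp f)"
  by (simp add: QL_def)

lemma qprod_neutral_left:
  assumes "\<And>x. x \<in> L \<Longrightarrow> pr u x = x" "g \<in> QL L"
  shows "qprod pr (bas u) g = g"
proof
  fix z
  have "qprod pr (bas u) g z = (\<Sum>y\<in>supp g. if y = z then g y else 0)"
    unfolding qprod_bas_left[OF QL_finite_supp[OF assms(2)]]
    using assms by (intro sum.cong) (auto simp: QL_def)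
  also have "\<dots> = g z"
    using QL_finite_supp[OF assms(2)] by auto
  finally show "qprod pr (bas u) g z = g z" .
qed

lemma span_qprod_left_closed:
  assumes "x \<in> fun_module.span S" "S \<subseteq> QL L" "a \<in> QL L" "fun_module.subspace T"
    and "\<And>s. s \<in> S \<Longrightarrow> qprod pr a s \<in> T"
  shows "qprod pr a x \<in> T"
proof -
  have "x \<in> QL L \<and> qprod pr a x \<in> T"
    using assms(1)
  proof (induction rule: fun_module.span_induct_alt)
    case base
    show ?case
      using fun_module.subspace_0[OF subspace_QL] fun_module.subspace_0[OF assms(4)]
      by (simp only: qprod_zero_left qprod_zero_right simp_thms)
  next
    case (step c s y)
    have sQ: "s \<in> QL L" using step(1) assms(2) by blast
    have yQ: "y \<in> QL L" and yT: "qprod pr a y \<in> T" using step(2) by auto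
    have "(\<lambda>z. c * s z) + y \<in> QL L"
      by (intro fun_module.subspace_add fun_module.subspace_scale subspace_QL sQ yQ)
    moreover have "qprod pr a ((\<lambda>z. c * s z) + y) = (\<lambda>z. c * qprod pr a s z) + qprod pr a y"
      using sQ yQ assms(3) by (simp add: plus_fun_def qprod_lincomb_right QL_finite_supp)
    moreover have "(\<lambda>z. c * qprod pr a s z) + qprod pr a y \<in> T"
      by (intro fun_module.subspace_add fun_module.subspace_scale assms(4,5) step(1) yT)
    ultimately show ?case by (simp add: plus_fun_def)
  qed
  then show ?thesis ..
qed

lemma span_qprod_right_closed:
  assumes "x \<in> fun_module.span S" "S \<subseteq> QL L" "a \<in> QL L" "fun_module.subspace T"
    and "\<And>s. s \<in> S \<Longrightarrow> qprod pr s a \<in> T"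
  shows "qprod pr x a \<in> T"
  using span_qprod_left_closed[OF assms(1-4), of "\<lambda>x y. pr y x"] assms(5)
  by (simp add: qprod_swap[of pr _ a])

lemma supp_qprod: "supp (qprod pr f g) \<subseteq> (\<lambda>(x, y). pr x y) ` (supp f \<times> supp g)"
proof
  fix z assume "z \<in> supp (qprod pr f g)"
  then obtain x where x: "x \<in> supp f"
    and "(\<Sum>y\<in>supp g. if pr x y = z then f x * g y else 0) \<noteq> 0"
    unfolding qprod_def by (auto elim: sum.not_neutral_contains_not_neutral)
  then obtain y where "y \<in> supp g" "pr x y = z"
    by (auto elim: sum.not_neutral_contains_not_neutral split: if_splits)
  with x show "z \<in> (\<lambda>(x, y). pr x y) ` (supp f \<times> supp g)" by force
qed

lemma subspace_gen_ideal: "fun_module.subspace (gen_ideal L pr S)"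
  unfolding fun_module.subspace_def
  using gen_ideal.zero[of L pr S] gen_ideal.add[of _ L pr S] gen_ideal.smult[of _ L pr S]
  by (auto simp: zero_fun_def plus_fun_def)

definition prods_ge :: "'a set \<Rightarrow> ('a \<Rightarrow> 'a \<Rightarrow> 'a) \<Rightarrow> nat \<Rightarrow> ('a \<Rightarrow> rat) set" where
  "prods_ge L pr m = {x. \<exists>i\<ge>m. bprods L pr i x}"

lemma prods_ge_antimono: "i \<le> j \<Longrightarrow> prods_ge L pr j \<subseteq> prods_ge L pr i"
  unfolding prods_ge_def by (blast intro: order_trans)

lemma aug_ideal_prods_ge: "u \<in> aug_ideal L \<Longrightarrow> u \<in> prods_ge L pr 1"
  by (auto simp: prods_ge_def intro!: exI[of _ 1] bprods.single)

lemma prods_ge_mult: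
  assumes "u \<in> aug_ideal L" "x \<in> prods_ge L pr m"
  shows "qprod pr u x \<in> prods_ge L pr (Suc m)" and "qprod pr x u \<in> prods_ge L pr (Suc m)"
  using assms bprods.prod[OF bprods.single[OF assms(1)]] bprods.prod[OF _ bprods.single[OF assms(1)]]
  by (fastforce simp: prods_ge_def)+

section \<open>Permutations acting on the loop algebra\<close>

lemma carrier_BijGroup: "carrier (BijGroup S) = Bij S"
  and one_BijGroup: "\<one>\<^bsub>BijGroup S\<^esub> = (\<lambda>x\<in>S. x)"
  and mult_BijGroup: "x \<in> Bij S \<Longrightarrow> y \<in> Bij S \<Longrightarrow> x \<otimes>\<^bsub>BijGroup S\<^esub> y = compose S x y"
  by (simp_all add: BijGroup_def)

definition push_perm :: "'a set \<Rightarrow> ('a \<Rightarrow> 'a) \<Rightarrow> ('a \<Rightarrow> rat) \<Rightarrow> ('a \<Rightarrow> rat)" where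
  "push_perm L \<phi> f = (\<lambda>z. if z \<in> L then f (inv_into L \<phi> z) else 0)"

lemma push_perm_eqI:
  assumes "\<phi> \<in> Bij L" "\<And>x. x \<in> L \<Longrightarrow> g (\<phi> x) = f x" "\<And>z. z \<notin> L \<Longrightarrow> g z = 0"
  shows "push_perm L \<phi> f = g"
proof
  fix z show "push_perm L \<phi> f z = g z"
  proof (cases "z \<in> L")
    case True
    then have "z \<in> \<phi> ` L" using assms(1) by (simp add: Bij_def bij_betw_def)
    then show ?thesis
      using True assms(2)[of "inv_into L \<phi> z"] by (simp add: push_perm_def f_inv_into_f inv_into_into)
  qed (simp add: push_perm_def assms(3))
qed

lemma push_perm_apply: "\<phi> \<in> Bij L \<Longrightarrow> x \<in> L \<Longrightarrow> push_perm L \<phi> f (\<phi> x) = f x"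
  by (auto simp: push_perm_def Bij_def bij_betw_def inv_into_f_f)

lemma push_perm_compose:
  assumes "\<phi> \<in> Bij L" "\<psi> \<in> Bij L"
  shows "push_perm L (compose L \<phi> \<psi>) f = push_perm L \<phi> (push_perm L \<psi> f)"
proof (rule push_perm_eqI[OF compose_Bij[OF assms]])
  fix x assume "x \<in> L"
  moreover have "\<psi> x \<in> L" using assms(2) \<open>x \<in> L\<close> Bij_imp_funcset by blast
  ultimately show "push_perm L \<phi> (push_perm L \<psi> f) (compose L \<phi> \<psi> x) = f x"
    using assms by (simp add: compose_def push_perm_apply)
qed (simp add: push_perm_def)

lemma push_perm_id: "supp f \<subseteq> L \<Longrightarrow> push_perm L (\<lambda>x\<in>L. x) f = f"
  by (rule push_perm_eqI) (auto simp: id_Bij)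

lemma push_perm_bas: "\<phi> \<in> Bij L \<Longrightarrow> a \<in> L \<Longrightarrow> push_perm L \<phi> (bas a) = bas (\<phi> a)"
  by (rule push_perm_eqI) (auto simp: bas_def Bij_def bij_betw_def inj_on_def)

lemma push_perm_QL:
  assumes "\<phi> \<in> Bij L" "f \<in> QL L"
  shows "push_perm L \<phi> f \<in> QL L"
proof -
  have "z \<in> \<phi> ` supp f" if "z \<in> supp (push_perm L \<phi> f)" for z
  proof -
    have "z \<in> L" "f (inv_into L \<phi> z) \<noteq> 0" using that by (auto simp: push_perm_def split: if_splits)
    moreover have "\<phi> (inv_into L \<phi> z) = z"
      using \<open>z \<in> L\<close> assms(1) by (simp add: Bij_def bij_betw_def f_inv_into_f)
    ultimately show ?thesis by (metis (mono_tags) image_eqI mem_Collect_eq)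
  qed
  then have "supp (push_perm L \<phi> f) \<subseteq> \<phi> ` supp f" by blast
  moreover have "\<phi> ` supp f \<subseteq> L" using assms by (auto simp: QL_def Bij_def bij_betw_def)
  ultimately show ?thesis
    using assms(2) unfolding QL_def mem_Collect_eq by (blast intro: finite_subset)
qed

section \<open>The augmentation filtration of a loop\<close>

locale loop =
  fixes L :: "'a set" and pr :: "'a \<Rightarrow> 'a \<Rightarrow> 'a" and e :: 'a
  assumes is_loop: "is_loop L pr e"
begin

lemma unit_closed: "e \<in> L"
  and mult_closed: "x \<in> L \<Longrightarrow> y \<in> L \<Longrightarrow> pr x y \<in> L"
  and left_unit: "x \<in> L \<Longrightarrow> pr e x = x"
  and right_unit: "x \<in> L \<Longrightarrow> pr x e = x"
  and left_transl_bij: "x \<in> L \<Longrightarrow> bij_betw (\<lambda>y. pr x y) L L"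
  using is_loop by (simp_all add: is_loop_def)

lemma QL_qprod:
  assumes "f \<in> QL L" "g \<in> QL L"
  shows "qprod pr f g \<in> QL L"
proof -
  have "(\<lambda>(x, y). pr x y) ` (supp f \<times> supp g) \<subseteq> L"
    and "finite ((\<lambda>(x, y). pr x y) ` (supp f \<times> supp g))"
    using assms mult_closed by (auto simp: QL_def)
  then show ?thesis
    using supp_qprod[of pr f g] unfolding QL_def mem_Collect_eq by (blast intro: finite_subset)
qed

lemma qprod_unit_left: "g \<in> QL L \<Longrightarrow> qprod pr (bas e) g = g"
  using qprod_neutral_left[of L pr e, OF left_unit] .

lemma qprod_unit_right: "g \<in> QL L \<Longrightarrow> qprod pr g (bas e) = g"
  using qprod_neutral_left[of L "\<lambda>x y. pr y x" e, OF right_unit] by (simp add: qprod_swap[of pr g])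

lemma aug_idealI:
  assumes "f \<in> QL L" "finite S" "supp f \<subseteq> S" "(\<Sum>x\<in>S. f x) = 0"
  shows "f \<in> aug_ideal L"
proof -
  have "(\<Sum>x\<in>supp f. f x) = (\<Sum>x\<in>S. f x)"
    by (rule sum.mono_neutral_left) (use assms in auto)
  with assms show ?thesis by (simp add: aug_ideal_def)
qed

lemma bas_diff_aug_ideal:
  assumes "x \<in> L" "y \<in> L"
  shows "(\<lambda>z. bas x z - bas y z) \<in> aug_ideal L"
proof (rule aug_idealI[of _ "{x, y}"])
  show "(\<lambda>z. bas x z - bas y z) \<in> QL L"
    using assms by (auto simp: QL_def bas_def intro: finite_subset[of _ "{x, y}"])
  show "(\<Sum>z\<in>{x, y}. bas x z - bas y z) = 0"
    by (cases "x = y") (simp_all add: bas_def)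
qed (auto simp: bas_def)

lemma QL_decomp:
  assumes a: "a \<in> QL L"
  obtains c a' where "a' \<in> aug_ideal L" "a = (\<lambda>z. c * bas e z + a' z)"
proof
  let ?c = "\<Sum>x\<in>supp a. a x"
  let ?a' = "\<lambda>z. a z - ?c * bas e z"
  have fin: "finite (insert e (supp a))" using QL_finite_supp[OF a] by simp
  have "(\<Sum>x\<in>insert e (supp a). a x) = ?c"
    by (rule sum.mono_neutral_right) (use fin in auto)
  moreover have "(\<Sum>x\<in>insert e (supp a). ?c * bas e x) = ?c"
    using fin by (simp add: bas_def sum_distrib_left[symmetric])
  ultimately show "?a' \<in> aug_ideal L"
    using fun_module.subspace_diff[OF subspace_QL a fun_module.subspace_scale[OF subspace_QL bas_QL[OF unit_closed]]]
    by (intro aug_idealI[OF _ fin]) (auto simp: sum_subtractf bas_def fun_diff_def)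
  show "a = (\<lambda>z. ?c * bas e z + ?a' z)" by simp
qed

lemma bprods_QL: "bprods L pr i x \<Longrightarrow> x \<in> QL L"
  by (induction rule: bprods.induct) (auto simp: aug_ideal_def QL_qprod)

lemma prods_ge_QL: "prods_ge L pr m \<subseteq> QL L"
  by (auto simp: prods_ge_def bprods_QL)

lemma span_prods_ge_QL: "fun_module.span (prods_ge L pr m) \<subseteq> QL L"
  by (rule fun_module.span_minimal[OF prods_ge_QL subspace_QL])

text \<open>Multiplying a product of \<open>i\<close> augmentation elements by \<open>c e + a'\<close> with \<open>a' \<in> I\<close>
  gives \<open>c\<close> times that product plus a product of \<open>i + 1\<close> augmentation elements.\<close>
lemma prods_ge_mult_QL:
  assumes "x \<in> prods_ge L pr m" "a \<in> QL L"
  shows "qprod pr a x \<in> fun_module.span (prods_ge L pr m)"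
    and "qprod pr x a \<in> fun_module.span (prods_ge L pr m)"
proof -
  obtain c a' where a': "a' \<in> aug_ideal L" and a: "a = (\<lambda>z. c * bas e z + a' z)"
    using QL_decomp[OF assms(2)] .
  have xQ: "x \<in> QL L" and a'Q: "a' \<in> QL L" using assms(1) prods_ge_QL a' by (auto simp: aug_ideal_def)
  have "qprod pr a' x \<in> prods_ge L pr m" "qprod pr x a' \<in> prods_ge L pr m"
    using prods_ge_mult[OF a' assms(1)] prods_ge_antimono[of m "Suc m"] by auto
  moreover have "(\<lambda>z. c * x z) \<in> fun_module.span (prods_ge L pr m)"
    using fun_module.span_scale[OF fun_module.span_base[OF assms(1)]] by simp
  ultimately have "(\<lambda>z. c * x z) + qprod pr a' x \<in> fun_module.span (prods_ge L pr m)"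
    and "(\<lambda>z. c * x z) + qprod pr x a' \<in> fun_module.span (prods_ge L pr m)"
    by (auto intro: fun_module.span_add fun_module.span_base)
  then show "qprod pr a x \<in> fun_module.span (prods_ge L pr m)"
    and "qprod pr x a \<in> fun_module.span (prods_ge L pr m)"
    using xQ a'Q unfolding a
    by (simp_all add: plus_fun_def qprod_lincomb_left qprod_lincomb_right QL_finite_supp
        qprod_unit_left qprod_unit_right)
qed

lemma aug_pow_eq_span: "aug_pow L pr m = fun_module.span (prods_ge L pr m)"
proof
  show "aug_pow L pr m \<subseteq> fun_module.span (prods_ge L pr m)"
  proof
    fix x assume "x \<in> aug_pow L pr m"
    then show "x \<in> fun_module.span (prods_ge L pr m)"
      unfolding aug_pow_def prods_ge_def[symmetric]
    proof (induction rule: gen_ideal.induct)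
      case (gen x)
      then show ?case by (rule fun_module.span_base)
    next
      case zero
      then show ?case using fun_module.span_zero by (simp add: zero_fun_def)
    next
      case (add x y)
      then show ?case using fun_module.span_add by (simp add: plus_fun_def)
    next
      case (smult x c)
      show ?case by (rule fun_module.span_scale[OF smult.IH])
    next
      case (lmult x a)
      then show ?case
        using span_qprod_left_closed[OF _ prods_ge_QL _ fun_module.subspace_span] prods_ge_mult_QL
        by blast
    next
      case (rmult x a)
      then show ?case
        using span_qprod_right_closed[OF _ prods_ge_QL _ fun_module.subspace_span] prods_ge_mult_QL
        by blast
    qed
  qed
  show "fun_module.span (prods_ge L pr m) \<subseteq> aug_pow L pr m"
    unfolding aug_pow_def prods_ge_def[symmetric]
    by (rule fun_module.span_minimal[OF _ subspace_gen_ideal]) (auto intro: gen_ideal.gen)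
qed

text \<open>\<open>I\<^sup>0\<close> is the whole algebra; note that \<open>aug_pow L pr 0\<close> is \<open>I\<close> rather than \<open>QL L\<close>,
  since \<open>bprods\<close> only produces products of at least one factor.\<close>
definition aug_filt :: "nat \<Rightarrow> ('a \<Rightarrow> rat) set" where
  "aug_filt m = (if m = 0 then QL L else aug_pow L pr m)"

lemma aug_filt_eq_span: "m \<ge> 1 \<Longrightarrow> aug_filt m = fun_module.span (prods_ge L pr m)"
  by (simp add: aug_filt_def aug_pow_eq_span)

lemma aug_filt_QL: "aug_filt m \<subseteq> QL L"
  by (simp add: aug_filt_def aug_pow_eq_span span_prods_ge_QL)

lemma subspace_aug_filt: "fun_module.subspace (aug_filt m)"
  by (simp add: aug_filt_def aug_pow_eq_span subspace_QL)

lemma aug_filt_Suc: "aug_filt (Suc m) \<subseteq> aug_filt m"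
  using aug_filt_QL[of "Suc m"] fun_module.span_mono[OF prods_ge_antimono[of m "Suc m" L pr]]
  by (cases "m = 0") (simp_all add: aug_filt_def aug_pow_eq_span)

sublocale filtered_action "BijGroup L" "push_perm L" aug_filt
proof (rule filtered_action.intro[OF group_BijGroup])
  show "push_perm L (x \<otimes>\<^bsub>BijGroup L\<^esub> y) f = push_perm L x (push_perm L y f)"
    if "x \<in> carrier (BijGroup L)" "y \<in> carrier (BijGroup L)" for x y f
    using that by (simp add: carrier_BijGroup mult_BijGroup push_perm_compose)
  show "push_perm L \<one>\<^bsub>BijGroup L\<^esub> f = f" if "f \<in> aug_filt 0" for f
    using that by (simp add: aug_filt_def one_BijGroup push_perm_id QL_def)
  show "push_perm L x (f - g) = push_perm L x f - push_perm L x g" for x f g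
    by (simp add: push_perm_def fun_eq_iff)
  show "0 \<in> aug_filt m" "f \<in> aug_filt m \<Longrightarrow> g \<in> aug_filt m \<Longrightarrow> f - g \<in> aug_filt m" for m f g
    using fun_module.subspace_0 fun_module.subspace_diff subspace_aug_filt by blast+
  show "aug_filt (Suc m) \<subseteq> aug_filt m" for m
    by (rule aug_filt_Suc)
qed

lemma aug_ideal_mult_aug_filt:
  assumes u: "u \<in> aug_ideal L" and f: "f \<in> aug_filt m"
  shows "qprod pr u f \<in> aug_filt (Suc m)"
proof (cases "m = 0")
  case True
  then have "f \<in> QL L" using f by (simp add: aug_filt_def)
  then show ?thesis
    using True prods_ge_mult_QL(2)[OF aug_ideal_prods_ge[OF u]] by (simp add: aug_filt_eq_span)
next
  case False
  have "u \<in> QL L" using u by (simp add: aug_ideal_def)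
  then show ?thesis
    using False f prods_ge_mult(1)[OF u]
      span_qprod_left_closed[OF _ prods_ge_QL _ fun_module.subspace_span fun_module.span_base]
    by (simp add: aug_filt_eq_span)
qed

lemma left_transl_shift:
  assumes y: "y \<in> L" and f: "f \<in> aug_filt m"
  shows "(\<lambda>z. qprod pr (bas y) f z - f z) \<in> aug_filt (Suc m)"
proof -
  have fQ: "f \<in> QL L" using f aug_filt_QL by blast
  have "qprod pr (\<lambda>z. bas y z - bas e z) f = (\<lambda>z. qprod pr (bas y) f z - f z)"
    by (simp add: qprod_diff_left QL_finite_supp[OF fQ] qprod_unit_left[OF fQ])
  then show ?thesis
    using aug_ideal_mult_aug_filt[OF bas_diff_aug_ideal[OF y unit_closed] f] by simp
qed

lemma left_transl_cancel:
  assumes y: "y \<in> L" and g: "g \<in> QL L" and yg: "qprod pr (bas y) g \<in> aug_filt j"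
  shows "g \<in> aug_filt j"
proof -
  have "g \<in> aug_filt i" if "i \<le> j" for i
    using that
  proof (induction i)
    case 0
    then show ?case using g by (simp add: aug_filt_def)
  next
    case (Suc i)
    have "(\<lambda>z. qprod pr (bas y) g z - g z) \<in> aug_filt (Suc i)"
      using left_transl_shift[OF y] Suc by simp
    moreover have "qprod pr (bas y) g \<in> aug_filt (Suc i)"
      using yg F_antimono[OF Suc.prems] by blast
    moreover have "g = qprod pr (bas y) g - (\<lambda>z. qprod pr (bas y) g z - g z)"
      by (simp add: fun_eq_iff)
    ultimately show ?case
      using fun_module.subspace_diff[OF subspace_aug_filt] by metis
  qed
  then show ?thesis by simp
qed

section \<open>Left translations and the lower central series\<close>

lemma ltrans_Bij: "a \<in> L \<Longrightarrow> ltrans L pr a \<in> Bij L"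
  using left_transl_bij[of a] by (simp add: Bij_def ltrans_def bij_betw_def inj_on_def)

lemma push_perm_ltrans:
  assumes a: "a \<in> L" and f: "f \<in> QL L"
  shows "push_perm L (ltrans L pr a) f = qprod pr (bas a) f"
proof (rule push_perm_eqI[OF ltrans_Bij[OF a]])
  fix x assume x: "x \<in> L"
  have "inj_on (\<lambda>y. pr a y) L" using left_transl_bij[OF a] by (simp add: bij_betw_def)
  then have "qprod pr (bas a) f (pr a x) = (\<Sum>y\<in>supp f. if y = x then f y else 0)"
    unfolding qprod_bas_left[OF QL_finite_supp[OF f]]
    using f x by (intro sum.cong) (auto simp: QL_def inj_on_def)
  then show "qprod pr (bas a) f (ltrans L pr a x) = f x"
    using x QL_finite_supp[OF f] by (auto simp: ltrans_def)
next
  fix z assume "z \<notin> L"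
  then show "qprod pr (bas a) f z = 0"
    unfolding qprod_bas_left[OF QL_finite_supp[OF f]]
    using f a mult_closed by (intro sum.neutral) (auto simp: QL_def)
qed

lemma has_degree_ltrans:
  assumes a: "a \<in> L"
  shows "has_degree 1 (ltrans L pr a)"
proof -
  let ?l = "ltrans L pr a"
  have lG: "?l \<in> carrier (BijGroup L)" using ltrans_Bij[OF a] by (simp add: carrier_BijGroup)
  have "shifts 1 ?l"
    unfolding shifts_def
  proof (intro allI ballI)
    fix m f assume f: "f \<in> aug_filt m"
    then have "f \<in> QL L" using aug_filt_QL by blast
    then have "push_perm L ?l f - f = (\<lambda>z. qprod pr (bas a) f z - f z)"
      by (simp add: push_perm_ltrans[OF a] fun_diff_def)
    then show "push_perm L ?l f - f \<in> aug_filt (m + 1)"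
      using left_transl_shift[OF a f] by simp
  qed
  moreover have "shifts 1 (inv\<^bsub>BijGroup L\<^esub> ?l)"
    unfolding shifts_def
  proof (intro allI ballI)
    fix m f assume f: "f \<in> aug_filt m"
    let ?g = "push_perm L (inv\<^bsub>BijGroup L\<^esub> ?l) f"
    have gQ: "?g \<in> QL L"
      using push_perm_QL[OF _ subsetD[OF aug_filt_QL f]] G.inv_closed[OF lG]
      by (simp add: carrier_BijGroup)
    have "qprod pr (bas a) ?g = push_perm L (?l \<otimes>\<^bsub>BijGroup L\<^esub> inv\<^bsub>BijGroup L\<^esub> ?l) f"
      using act_mult[OF lG G.inv_closed[OF lG]] push_perm_ltrans[OF a gQ] by simp
    also have "\<dots> = f"
      using f F_antimono[of 0 m] act_one by (simp add: G.r_inv[OF lG] subset_iff)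
    finally have ag: "qprod pr (bas a) ?g = f" .
    then have "?g \<in> aug_filt m" using left_transl_cancel[OF a gQ] f by simp
    from left_transl_shift[OF a this] have "(\<lambda>z. f z - ?g z) \<in> aug_filt (Suc m)"
      unfolding ag .
    moreover have "?g - f = 0 - (\<lambda>z. f z - ?g z)" by (simp add: fun_eq_iff)
    ultimately show "?g - f \<in> aug_filt (m + 1)"
      using F_diff[OF F_zero] by simp
  qed
  ultimately show ?thesis using lG by (simp add: has_degree_def)
qed

lemma has_degree_lcs_LMlt:
  assumes "n \<ge> 1" "F \<in> lcs (BijGroup L) (LMlt L pr) n"
  shows "has_degree n F"
proof -
  have "\<forall>h\<in>LMlt L pr. has_degree 1 h"
    using has_degree_generate[of "ltrans L pr ` L" 1] has_degree_ltrans by (auto simp: LMlt_def)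
  then show ?thesis
    using has_degree_lcs assms by (cases n) auto
qed

lemma subspace_aug_pow: "fun_module.subspace (aug_pow L pr n)"
  by (simp add: aug_pow_eq_span)

text \<open>With \<open>x d = y d'\<close>, in \<open>QL L\<close> we have \<open>y (d' - e) = x (d - e) + (x - y)\<close>; so \<open>y (d' - e)\<close>
  lies in \<open>I\<^sup>n\<close>, and cancelling \<open>y\<close> puts \<open>d'\<close> into \<open>D\<^sub>n L\<close>.\<close>
lemma lcoset_subset:
  assumes n: "n \<ge> 1" and x: "x \<in> L" and y: "y \<in> L"
    and xy: "(\<lambda>z. bas x z - bas y z) \<in> aug_pow L pr n"
  shows "lcoset pr x (Dsub L pr e n) \<subseteq> lcoset pr y (Dsub L pr e n)"
proof
  fix w assume "w \<in> lcoset pr x (Dsub L pr e n)"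
  then obtain d where d: "d \<in> L" "(\<lambda>z. bas d z - bas e z) \<in> aug_pow L pr n" and w: "w = pr x d"
    by (auto simp: lcoset_def Dsub_def)
  have "pr x d \<in> (\<lambda>v. pr y v) ` L"
    using left_transl_bij[OF y] mult_closed[OF x d(1)] by (simp add: bij_betw_def)
  then obtain d' where d': "d' \<in> L" "pr y d' = pr x d" by auto
  have "qprod pr (bas x) (\<lambda>z. bas d z - bas e z) \<in> aug_pow L pr n"
    using d(2) bas_QL[OF x] unfolding aug_pow_def by (rule gen_ideal.lmult)
  then have "qprod pr (bas x) (\<lambda>z. bas d z - bas e z) + (\<lambda>z. bas x z - bas y z) \<in> aug_pow L pr n"
    using fun_module.subspace_add[OF subspace_aug_pow _ xy] by blast
  moreover have "qprod pr (bas y) (\<lambda>z. bas d' z - bas e z)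
      = qprod pr (bas x) (\<lambda>z. bas d z - bas e z) + (\<lambda>z. bas x z - bas y z)"
    by (simp add: qprod_diff_right qprod_bas_bas right_unit x y d'(2) fun_eq_iff)
  ultimately have "qprod pr (bas y) (\<lambda>z. bas d' z - bas e z) \<in> aug_filt n"
    using n by (simp add: aug_filt_def)
  moreover have "(\<lambda>z. bas d' z - bas e z) \<in> QL L"
    using bas_diff_aug_ideal[OF d'(1) unit_closed] by (simp add: aug_ideal_def)
  ultimately have "(\<lambda>z. bas d' z - bas e z) \<in> aug_filt n"
    by (rule left_transl_cancel[OF y, rotated])
  then have "(\<lambda>z. bas d' z - bas e z) \<in> aug_pow L pr n"
    using n by (simp add: aug_filt_def)
  then show "w \<in> lcoset pr y (Dsub L pr e n)"
    using d'(1) w d'(2) by (auto simp: lcoset_def Dsub_def intro!: image_eqI[of _ _ d'])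
qed

lemma lcoset_eq:
  assumes n: "n \<ge> 1" and x: "x \<in> L" and y: "y \<in> L"
    and xy: "(\<lambda>z. bas x z - bas y z) \<in> aug_pow L pr n"
  shows "lcoset pr x (Dsub L pr e n) = lcoset pr y (Dsub L pr e n)"
proof -
  have "0 - (\<lambda>z. bas x z - bas y z) \<in> aug_pow L pr n"
    using fun_module.subspace_diff[OF subspace_aug_pow fun_module.subspace_0[OF subspace_aug_pow] xy] .
  then have "(\<lambda>z. bas y z - bas x z) \<in> aug_pow L pr n" by (simp add: fun_diff_def)
  then show ?thesis using lcoset_subset assms by blast
qed

end

theorem lemma3p2:
  fixes L :: "'a set" and pr :: "'a \<Rightarrow> 'a \<Rightarrow> 'a" and e :: 'a and n :: nat
  assumes "is_loop L pr e" and "n \<ge> 1"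
    and "a \<in> L" and "F \<in> lcs (BijGroup L) (LMlt L pr) n"
  shows "lcoset pr (F a) (Dsub L pr e n) = lcoset pr a (Dsub L pr e n)"
proof -
  interpret loop L pr e by (rule loop.intro) fact
  have F: "has_degree n F" using has_degree_lcs_LMlt assms(2,4) .
  then have FB: "F \<in> Bij L" by (simp add: has_degree_def carrier_BijGroup)
  have "push_perm L F (bas a) - bas a \<in> aug_filt (0 + n)"
    using F bas_QL[OF assms(3)] by (intro shiftsD) (simp_all add: has_degree_def aug_filt_def)
  then have "(\<lambda>z. bas (F a) z - bas a z) \<in> aug_pow L pr n"
    using assms(2) by (simp add: push_perm_bas[OF FB assms(3)] aug_filt_def fun_diff_def)
  then show ?thesis
    using lcoset_eq assms(2,3) Bij_imp_funcset[OF FB] by blast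
qed

end
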